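(* A polynomial $F\in\mathbb C[x,y,s,t]$ of degree $d$ is Cartesian if and only if there exist sets $I,J\subset\mathbb C^2$ with $|I|,|J|>d^2$ such that $I\times J\subset Z(F)$.
   Context: $I\times J$ is viewed as a subset of $\mathbb C^4$ with coordinates $(x,y,s,t)$, $I$ in the $(x,y)$-coordinates and $J$ in the $(s,t)$-coordinates; $Z(F)$ is the complex zero set of $F$. $F$ is Cartesian if there exist $G\in\mathbb C[x,y]\setminus\mathbb C$, $K\in\mathbb C[s,t]\setminus\mathbb C$ and $H,L\in\mathbb C[x,y,s,t]$ with $F=G(x,y)H(x,y,s,t)+K(s,t)L(x,y,s,t)$. *)

theory Defs
  imports "HOL-Analysis.Analysis" "HOL-Library.Poly_Mapping"
begin

text \<open>Variable indices: 0 = x, 1 = y, 2 = s, 3 = t.\<close>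

type_synonym mpoly = "(nat \<Rightarrow>\<^sub>0 nat) \<Rightarrow>\<^sub>0 complex"

definition poly_in_vars :: "nat set \<Rightarrow> mpoly \<Rightarrow> bool" where
  "poly_in_vars V p \<longleftrightarrow> (\<forall>m \<in> Poly_Mapping.keys p. Poly_Mapping.keys m \<subseteq> V)"

definition is_const_mpoly :: "mpoly \<Rightarrow> bool" where
  "is_const_mpoly p \<longleftrightarrow> Poly_Mapping.keys p \<subseteq> {0}"

text \<open>Total degree (the zero polynomial gets degree 0).\<close>
definition mon_deg :: "(nat \<Rightarrow>\<^sub>0 nat) \<Rightarrow> nat" where
  "mon_deg m = (\<Sum>i\<in>Poly_Mapping.keys m. Poly_Mapping.lookup m i)"

definition total_degree :: "mpoly \<Rightarrow> nat" where
  "total_degree p = Max (insert 0 (mon_deg ` Poly_Mapping.keys p))"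

definition mpoly_eval :: "mpoly \<Rightarrow> (nat \<Rightarrow> complex) \<Rightarrow> complex" where
  "mpoly_eval p v = (\<Sum>m\<in>Poly_Mapping.keys p. Poly_Mapping.lookup p m * (\<Prod>i\<in>Poly_Mapping.keys m. v i ^ Poly_Mapping.lookup m i))"

definition pt4 :: "complex \<Rightarrow> complex \<Rightarrow> complex \<Rightarrow> complex \<Rightarrow> nat \<Rightarrow> complex" where
  "pt4 x y s t = (\<lambda>i. if i = 0 then x else if i = 1 then y else if i = 2 then s
                       else if i = 3 then t else 0)"

text \<open>Complex zero set of F in C^4, written as pairs of points of C^2
  ((x,y),(s,t)) so that I \<times> J is directly a subset.\<close>
definition zero_set4 :: "mpoly \<Rightarrow> ((complex \<times> complex) \<times> (complex \<times> complex)) set" where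
  "zero_set4 F = {((x, y), (s, t)). mpoly_eval F (pt4 x y s t) = 0}"

definition cartesian :: "mpoly \<Rightarrow> bool" where
  "cartesian F \<longleftrightarrow> (\<exists>G K H L.
      poly_in_vars {0, 1} G \<and> \<not> is_const_mpoly G \<and>
      poly_in_vars {2, 3} K \<and> \<not> is_const_mpoly K \<and>
      poly_in_vars {0, 1, 2, 3} H \<and> poly_in_vars {0, 1, 2, 3} L \<and>
      F = G * H + K * L)"

end

theory Submission
  imports Defs
    "HOL-Computational_Algebra.Polynomial_Factorial"
    "HOL-Computational_Algebra.Field_as_Ring"
    "HOL-Computational_Algebra.Fundamental_Theorem_Algebra"
begin

text \<open>If \<open>F = G(x, y) H + K(s, t) L\<close> with \<open>G, K\<close> nonconstant, then the zero sets of \<open>G\<close> and \<open>K\<close>,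
  both infinite over \<open>\<complex>\<close>, span a product inside \<open>Z(F)\<close>.

  Conversely, write \<open>F = \<Sum>\<^sub>j\<^sub>k a\<^sub>j\<^sub>k(x, y) s\<^sup>j t\<^sup>k\<close>, all \<open>a\<^sub>j\<^sub>k\<close> of degree \<open>\<le> d\<close>.  For every
  \<open>(s, t) \<in> J\<close> the slice \<open>F(\<cdot>, \<cdot>, s, t)\<close> has degree \<open>\<le> d\<close> and vanishes on the more than \<open>d\<^sup>2\<close>
  points of \<open>I\<close>.  By a weak Bezout bound (two coprime plane curves of degrees \<open>d\<^sub>1, d\<^sub>2\<close> meet in
  at most \<open>d\<^sub>1 d\<^sub>2\<close> points, proved by counting dimensions of spaces of polynomials of bounded
  degree) all slices share a nonconstant factor \<open>G(x, y)\<close>.  Pick \<open>b\<^sub>1, \<dots>, b\<^sub>r\<close> whose classes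
  modulo \<open>G\<close> form a basis of the span of the classes of the \<open>a\<^sub>j\<^sub>k\<close>, say
  \<open>a\<^sub>j\<^sub>k \<equiv> \<Sum>\<^sub>i \<lambda>\<^sub>j\<^sub>k\<^sub>i b\<^sub>i\<close>.  Then every \<open>e\<^sub>i(s, t) = \<Sum>\<^sub>j\<^sub>k \<lambda>\<^sub>j\<^sub>k\<^sub>i s\<^sup>j t\<^sup>k\<close> vanishes on \<open>J\<close>, so the
  same argument yields a common nonconstant factor \<open>K(s, t)\<close> of the \<open>e\<^sub>i\<close>, and
  \<open>F = G H + \<Sum>\<^sub>i b\<^sub>i e\<^sub>i = G H + K L\<close>.\<close>

definition semiring_hom :: "('a::comm_semiring_1 \<Rightarrow> 'b::comm_semiring_1) \<Rightarrow> bool" where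
  "semiring_hom h \<longleftrightarrow>
     h 0 = 0 \<and> h 1 = 1 \<and> (\<forall>a b. h (a + b) = h a + h b) \<and> (\<forall>a b. h (a * b) = h a * h b)"

lemma
  assumes "semiring_hom h"
  shows semiring_hom_0: "h 0 = 0" and semiring_hom_1: "h 1 = 1"
    and semiring_hom_add: "h (a + b) = h a + h b"
    and semiring_hom_mult: "h (a * b) = h a * h b"
  using assms by (simp_all add: semiring_hom_def)

lemma semiring_hom_sum: "semiring_hom h \<Longrightarrow> h (sum f A) = (\<Sum>x\<in>A. h (f x))"
  by (induction A rule: infinite_finite_induct) (simp_all add: semiring_hom_0 semiring_hom_add)

lemma semiring_hom_prod: "semiring_hom h \<Longrightarrow> h (prod f A) = (\<Prod>x\<in>A. h (f x))"
  by (induction A rule: infinite_finite_induct) (simp_all add: semiring_hom_1 semiring_hom_mult)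

lemma semiring_hom_diff:
  fixes h :: "'a::comm_ring_1 \<Rightarrow> 'b::comm_ring_1"
  assumes "semiring_hom h"
  shows "h (a - b) = h a - h b"
  using semiring_hom_add[OF assms, of "a - b" b] by (simp add: eq_diff_eq)

lemma semiring_hom_comp: "semiring_hom g \<Longrightarrow> semiring_hom h \<Longrightarrow> semiring_hom (\<lambda>a. g (h a))"
  by (simp add: semiring_hom_def)

lemma semiring_hom_pCons_const: "semiring_hom (\<lambda>c. [:c:])"
  by (simp add: semiring_hom_def one_pCons mult.commute)

lemma semiring_hom_poly: "semiring_hom (\<lambda>p. poly p x)"
  by (simp add: semiring_hom_def)

lemma semiring_hom_map_poly:
  assumes "semiring_hom h"
  shows "semiring_hom (map_poly h)"
proof -
  have add: "map_poly h (p + q) = map_poly h p + map_poly h q" for p q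
    by (rule poly_eqI) (simp add: coeff_map_poly semiring_hom_0[OF assms] semiring_hom_add[OF assms])
  have "map_poly h (p * q) = map_poly h p * map_poly h q" for p q
  proof (induction p)
    case (pCons a p)
    then show ?case
      by (simp add: add map_poly_pCons map_poly_smult semiring_hom_0[OF assms]
          semiring_hom_mult[OF assms])
  qed simp
  then show ?thesis
    using add by (simp add: semiring_hom_def semiring_hom_0[OF assms] semiring_hom_1[OF assms])
qed

text \<open>A bivariate polynomial is a polynomial in the outer variable \<open>y\<close> whose coefficients are
  polynomials in the inner variable \<open>x\<close>; \<open>h\<close> maps the coefficients into the target ring.\<close>

definition bipoly_eval :: "('a::zero \<Rightarrow> 'b::comm_semiring_1) \<Rightarrow> 'b \<Rightarrow> 'b \<Rightarrow> 'a poly poly \<Rightarrow> 'b" where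
  "bipoly_eval h x y g = poly (map_poly (\<lambda>c. poly (map_poly h c) x) g) y"

lemma bipoly_eval_0 [simp]: "bipoly_eval h x y 0 = 0"
  by (simp add: bipoly_eval_def)

lemma semiring_hom_bipoly_eval: "semiring_hom h \<Longrightarrow> semiring_hom (bipoly_eval h x y)"
  unfolding bipoly_eval_def
  by (intro semiring_hom_comp[OF semiring_hom_poly] semiring_hom_map_poly
      semiring_hom_comp[OF semiring_hom_poly, of "map_poly h"])

lemma bipoly_eval_const: "h 0 = 0 \<Longrightarrow> bipoly_eval h x y [:[:c:]:] = h c"
  by (simp add: bipoly_eval_def map_poly_pCons)

lemma bipoly_eval_monom:
  "h 0 = 0 \<Longrightarrow> bipoly_eval h x y (monom (monom c a) b) = h c * x ^ a * y ^ b"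
  by (simp add: bipoly_eval_def map_poly_monom poly_monom)

lemma bipoly_eval_map_poly_map_poly:
  "f 0 = 0 \<Longrightarrow> h 0 = 0 \<Longrightarrow> bipoly_eval h x y (map_poly (map_poly f) g) = bipoly_eval (\<lambda>c. h (f c)) x y g"
  by (simp add: bipoly_eval_def map_poly_map_poly o_def)

lemma poly_map_poly_commute:
  assumes "\<phi> 0 = 0" "h 0 = 0" "\<And>a b. \<phi> (a + b) = \<phi> a + \<phi> b" "\<And>a. \<phi> (X * a) = x * \<phi> a"
  shows "\<phi> (poly (map_poly h p) X) = poly (map_poly (\<lambda>c. \<phi> (h c)) p) x"
  by (induction p) (simp_all add: assms map_poly_pCons)

text \<open>Only additivity and multiplication by the variables are required of \<open>\<phi>\<close>: evaluation of
  multivariate polynomials is never shown to be multiplicative.\<close>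

lemma bipoly_eval_commute:
  assumes "\<phi> 0 = 0" "h 0 = 0" "\<And>a b. \<phi> (a + b) = \<phi> a + \<phi> b"
    and "\<And>a. \<phi> (X * a) = x * \<phi> a" "\<And>a. \<phi> (Y * a) = y * \<phi> a"
  shows "\<phi> (bipoly_eval h X Y g) = bipoly_eval (\<lambda>c. \<phi> (h c)) x y g"
  unfolding bipoly_eval_def using assms
  by (simp add: poly_map_poly_commute[where \<phi> = \<phi> and X = Y and x = y]
      poly_map_poly_commute[where \<phi> = \<phi> and X = X and x = x])

type_synonym bipoly = "complex poly poly"

abbreviation poly2 :: "bipoly \<Rightarrow> complex \<Rightarrow> complex \<Rightarrow> complex" where
  "poly2 g x y \<equiv> bipoly_eval (\<lambda>c. c) x y g"

lemma semiring_hom_poly2: "semiring_hom (\<lambda>g. poly2 g x y)"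
  by (rule semiring_hom_bipoly_eval) (simp add: semiring_hom_def)

lemma poly2_altdef: "poly2 g x y = poly (map_poly (\<lambda>c. poly c x) g) y"
  by (simp add: bipoly_eval_def)

lemma poly2_all_0_iff_0: "(\<forall>x y. poly2 g x y = 0) \<longleftrightarrow> g = 0"
proof
  assume zero: "\<forall>x y. poly2 g x y = 0"
  have "map_poly (\<lambda>c. poly c x) g = 0" for x
    using zero poly_all_0_iff_0 unfolding poly2_altdef by blast
  then have "poly (coeff g n) x = 0" for n x
    by (metis coeff_0 coeff_map_poly poly_0)
  then have "coeff g n = 0" for n
    using poly_all_0_iff_0 by blast
  then show "g = 0"
    by (simp add: poly_eq_iff)
qed (simp add: bipoly_eval_def)

lemma poly2_constant:
  assumes "\<And>x y. poly2 g x y = c"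
  shows "g = [:[:c:]:]"
proof -
  have "poly2 (g - [:[:c:]:]) x y = 0" for x y
    by (simp add: semiring_hom_diff[OF semiring_hom_poly2] bipoly_eval_const assms)
  then have "g - [:[:c:]:] = 0"
    using poly2_all_0_iff_0 by blast
  then show ?thesis
    by simp
qed

lemma complex_poly_root_exists: "0 < degree (p :: complex poly) \<Longrightarrow> \<exists>z. poly p z = 0"
  using fundamental_theorem_of_algebra constant_degree by (metis neq0_conv)

lemma infinite_zeros_poly2:
  assumes "\<nexists>c. g = [:[:c:]:]"
  shows "infinite {(x, y). poly2 g x y = 0}"
proof (cases "degree g = 0")
  case True
  then obtain q where g: "g = [:q:]"
    by (metis degree_eq_zeroE)
  have "0 < degree q"
    using assms g by (metis degree_eq_zeroE neq0_conv)
  then obtain x0 where x0: "poly q x0 = 0"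
    using complex_poly_root_exists by blast
  have "range (Pair x0) \<subseteq> {(x, y). poly2 g x y = 0}"
    using x0 by (auto simp: poly2_altdef g map_poly_pCons)
  moreover have "infinite (range (Pair x0 :: complex \<Rightarrow> _))"
    using infinite_UNIV_char_0 by (auto dest: finite_imageD simp: inj_on_def)
  ultimately show ?thesis
    using finite_subset by blast
next
  case False
  let ?A = "{x. poly (lead_coeff g) x \<noteq> 0}"
  have "lead_coeff g \<noteq> 0"
    using False by auto
  then have "finite (UNIV - ?A)"
    using poly_roots_finite by (simp add: set_diff_eq del: leading_coeff_0_iff)
  then have "infinite ?A"
    using infinite_UNIV_char_0 Diff_infinite_finite by blast
  have "\<exists>y. poly2 g x y = 0" if "x \<in> ?A" for x
  proof -
    have "degree (map_poly (\<lambda>c. poly c x) g) = degree g"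
      using that by (simp add: map_poly_degree_eq)
    then show ?thesis
      using False complex_poly_root_exists unfolding poly2_altdef by simp
  qed
  then obtain Y where "\<And>x. x \<in> ?A \<Longrightarrow> poly2 g x (Y x) = 0"
    by metis
  then have "(\<lambda>x. (x, Y x)) ` ?A \<subseteq> {(x, y). poly2 g x y = 0}"
    by auto
  moreover have "infinite ((\<lambda>x. (x, Y x)) ` ?A)"
    using \<open>infinite ?A\<close> by (simp add: finite_image_iff inj_on_def)
  ultimately show ?thesis
    using finite_subset by blast
qed

lemma is_unit_const2: "c \<noteq> 0 \<Longrightarrow> is_unit ([:[:c:]:] :: bipoly)"
  by (simp add: is_unit_const_poly_iff dvd_field_iff)

lemma prime_nonconstant2: "prime (g :: bipoly) \<Longrightarrow> \<nexists>c. g = [:[:c:]:]"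
proof clarify
  fix c
  assume "prime ([:[:c:]:] :: bipoly)"
  then show False
    using is_unit_const2[of c] not_prime_unit by (cases "c = 0") auto
qed

text \<open>Exponent pairs \<open>(a, b)\<close> stand for the monomial \<open>x\<^sup>a y\<^sup>b\<close>.\<close>

definition coeff2 :: "bipoly \<Rightarrow> nat \<times> nat \<Rightarrow> complex" where
  "coeff2 g m = coeff (coeff g (snd m)) (fst m)"

definition monom2 :: "nat \<times> nat \<Rightarrow> bipoly" where
  "monom2 m = monom (monom 1 (fst m)) (snd m)"

lemma coeff2_eqI: "(\<And>m. coeff2 f m = coeff2 g m) \<Longrightarrow> f = g"
  unfolding coeff2_def by (metis fst_conv poly_eqI snd_conv)

lemma coeff2_0 [simp]: "coeff2 0 m = 0"
  by (simp add: coeff2_def)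

lemma coeff2_sum: "coeff2 (sum f A) m = (\<Sum>x\<in>A. coeff2 (f x) m)"
  by (simp add: coeff2_def coeff_sum)

lemma coeff2_monom2: "coeff2 (monom2 m) m' = (if m = m' then 1 else 0)"
  by (auto simp: coeff2_def monom2_def coeff_monom prod_eq_iff)

lemma poly2_monom2: "poly2 (monom2 m) x y = x ^ fst m * y ^ snd m"
  by (simp add: monom2_def bipoly_eval_monom)

text \<open>The substitution \<open>g(z, z u)\<close>, read as a polynomial in the outer variable \<open>z\<close> over
  \<open>\<complex>[u]\<close>: its degree is the total degree of \<open>g\<close>, and the \<open>u\<close>-degree of its leading coefficient
  selects the leading monomial of \<open>g\<close> in the graded order.  Multiplicativity of both follows
  since the substitution is a ring homomorphism into a domain.\<close>

definition blowup :: "bipoly \<Rightarrow> complex poly poly" where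
  "blowup = bipoly_eval (\<lambda>c. [:[:c:]:]) [:0, 1:] [:0, [:0, 1:]:]"

lemma semiring_hom_blowup: "semiring_hom blowup"
  unfolding blowup_def
  by (intro semiring_hom_bipoly_eval semiring_hom_comp[OF semiring_hom_pCons_const]
      semiring_hom_pCons_const)

lemma coeff_blowup: "coeff (coeff (blowup g) k) b = (if b \<le> k then coeff2 g (k - b, b) else 0)"
proof -
  have inner: "coeff (poly (map_poly (\<lambda>c. [:[:c:]:]) q) [:0, 1:]) k = [:coeff q k:]"
    for q :: "complex poly" and k
    by (induction q arbitrary: k) (auto simp: map_poly_pCons coeff_pCons split: nat.splits)
  show ?thesis
    unfolding blowup_def bipoly_eval_def
  proof (induction g arbitrary: k b)
    case (pCons q g)
    then show ?case
      by (cases k; cases b)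
        (simp_all add: map_poly_pCons inner coeff2_def coeff_pCons split: nat.splits)
  qed (simp add: coeff2_def)
qed

definition tdeg :: "bipoly \<Rightarrow> nat" where
  "tdeg g = degree (blowup g)"

lemma coeff2_le_tdeg: "coeff2 g m \<noteq> 0 \<Longrightarrow> fst m + snd m \<le> tdeg g"
  unfolding tdeg_def using coeff_blowup[of g "fst m + snd m" "snd m"]
  by (metis add_diff_cancel_right' coeff_0 le_add2 le_degree prod.collapse)

lemma tdeg_le_iff: "tdeg g \<le> N \<longleftrightarrow> (\<forall>m. coeff2 g m \<noteq> 0 \<longrightarrow> fst m + snd m \<le> N)"
proof
  assume bound: "\<forall>m. coeff2 g m \<noteq> 0 \<longrightarrow> fst m + snd m \<le> N"
  have "coeff (blowup g) k = 0" if "N < k" for k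
  proof (rule poly_eqI)
    fix b
    show "coeff (coeff (blowup g) k) b = coeff 0 b"
      using bound[rule_format, of "(k - b, b)"] that by (force simp: coeff_blowup)
  qed
  then show "tdeg g \<le> N"
    unfolding tdeg_def by (blast intro: degree_le)
qed (use coeff2_le_tdeg order_trans in blast)

lemma blowup_eq_0_iff: "blowup g = 0 \<longleftrightarrow> g = 0"
proof
  assume "blowup g = 0"
  then show "g = 0"
    by (intro coeff2_eqI)
      (metis coeff_0 coeff_blowup coeff2_0 add_diff_cancel_right' le_add2 prod.collapse)
qed (simp add: semiring_hom_0[OF semiring_hom_blowup])

lemma tdeg_mult: "f \<noteq> 0 \<Longrightarrow> g \<noteq> 0 \<Longrightarrow> tdeg (f * g) = tdeg f + tdeg g"
  unfolding tdeg_def semiring_hom_mult[OF semiring_hom_blowup]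
  by (rule degree_mult_eq) (simp_all add: blowup_eq_0_iff)

lemma tdeg_mult_le: "tdeg (f * g) \<le> tdeg f + tdeg g"
  unfolding tdeg_def semiring_hom_mult[OF semiring_hom_blowup] by (rule degree_mult_le)

lemma tdeg_add_le: "tdeg (f + g) \<le> max (tdeg f) (tdeg g)"
  unfolding tdeg_def semiring_hom_add[OF semiring_hom_blowup] by (rule degree_add_le_max)

lemma tdeg_sum_le: "(\<And>x. x \<in> A \<Longrightarrow> tdeg (f x) \<le> N) \<Longrightarrow> tdeg (sum f A) \<le> N"
proof (induction A rule: infinite_finite_induct)
  case (insert x A)
  then have "tdeg (f x) \<le> N" "tdeg (sum f A) \<le> N"
    by simp_all
  then show ?case
    using tdeg_add_le[of "f x" "sum f A"] insert.hyps by simp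
qed (simp_all add: tdeg_def semiring_hom_0[OF semiring_hom_blowup])

lemma tdeg_0 [simp]: "tdeg 0 = 0"
  by (simp add: tdeg_def semiring_hom_0[OF semiring_hom_blowup])

lemma tdeg_const [simp]: "tdeg [:[:c:]:] = 0"
  by (simp add: tdeg_def blowup_def bipoly_eval_const)

lemma tdeg_monom2: "tdeg (monom2 m) = fst m + snd m"
  by (rule antisym) (auto simp: tdeg_le_iff coeff2_monom2 intro: coeff2_le_tdeg)

lemma tdeg_prod_le: "(\<And>x. x \<in> A \<Longrightarrow> tdeg (f x) \<le> 1) \<Longrightarrow> tdeg (prod f A) \<le> card A"
proof (induction A rule: infinite_finite_induct)
  case (insert x A)
  then have "tdeg (f x) \<le> 1" "tdeg (prod f A) \<le> card A"
    by simp_all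
  then show ?case
    using tdeg_mult_le[of "f x" "prod f A"] insert.hyps by simp
qed (simp_all add: one_pCons)

definition lead_monom2 :: "bipoly \<Rightarrow> nat \<times> nat" where
  "lead_monom2 g =
     (tdeg g - degree (lead_coeff (blowup g)), degree (lead_coeff (blowup g)))"

lemma
  assumes "g \<noteq> 0"
  shows coeff2_lead_monom2: "coeff2 g (lead_monom2 g) \<noteq> 0"
    and lead_monom2_total: "fst (lead_monom2 g) + snd (lead_monom2 g) = tdeg g"
proof -
  have "lead_coeff (blowup g) \<noteq> 0"
    using assms by (simp add: blowup_eq_0_iff)
  then have nz: "coeff (lead_coeff (blowup g)) (degree (lead_coeff (blowup g))) \<noteq> 0"
    by simp
  then have "degree (lead_coeff (blowup g)) \<le> tdeg g"
    by (metis coeff_blowup tdeg_def)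
  then show "coeff2 g (lead_monom2 g) \<noteq> 0" "fst (lead_monom2 g) + snd (lead_monom2 g) = tdeg g"
    using nz by (simp_all add: lead_monom2_def coeff_blowup tdeg_def)
qed

lemma lead_monom2_mult:
  assumes "f \<noteq> 0" "g \<noteq> 0"
  shows "lead_monom2 (f * g) =
    (fst (lead_monom2 f) + fst (lead_monom2 g), snd (lead_monom2 f) + snd (lead_monom2 g))"
proof -
  have "lead_coeff (blowup f) \<noteq> 0" "lead_coeff (blowup g) \<noteq> 0"
    using assms by (simp_all add: blowup_eq_0_iff)
  then have "degree (lead_coeff (blowup (f * g))) =
      degree (lead_coeff (blowup f)) + degree (lead_coeff (blowup g))"
    unfolding semiring_hom_mult[OF semiring_hom_blowup] lead_coeff_mult by (rule degree_mult_eq)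
  then show ?thesis
    using lead_monom2_total[OF assms(1)] lead_monom2_total[OF assms(2)] tdeg_mult[OF assms]
    by (simp add: lead_monom2_def)
qed

definition scale2 :: "complex \<Rightarrow> bipoly \<Rightarrow> bipoly" where
  "scale2 c g = [:[:c:]:] * g"

lemma const2_add: "[:[:a + b:]:] = [:[:a:]:] + ([:[:b:]:] :: bipoly)"
  by simp

lemma const2_mult: "[:[:a * b:]:] = [:[:a:]:] * ([:[:b:]:] :: bipoly)"
  by simp

interpretation bipoly: vector_space scale2
  by unfold_locales
    (simp_all only: scale2_def const2_add const2_mult distrib_left distrib_right mult.assoc
      one_pCons[symmetric] mult_1_left)

lemma coeff2_scale2: "coeff2 (scale2 c g) m = c * coeff2 g m"
  by (simp add: scale2_def coeff2_def)

lemma poly2_scale2: "poly2 (scale2 c g) x y = c * poly2 g x y"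
  unfolding scale2_def semiring_hom_mult[OF semiring_hom_poly2] by (simp add: bipoly_eval_const)

lemma tdeg_scale2_le: "tdeg (scale2 c g) \<le> tdeg g"
  using tdeg_mult_le[of "[:[:c:]:]" g] by (simp add: scale2_def)

lemma coeff2_sum_monom2:
  assumes "finite S"
  shows "coeff2 (\<Sum>m\<in>S. scale2 (c m) (monom2 m)) m' = (if m' \<in> S then c m' else 0)"
proof -
  have "coeff2 (\<Sum>m\<in>S. scale2 (c m) (monom2 m)) m' = (\<Sum>m\<in>S. if m = m' then c m' else 0)"
    unfolding coeff2_sum by (rule sum.cong) (simp_all add: coeff2_scale2 coeff2_monom2)
  then show ?thesis
    using assms by simp
qed

section \<open>A weak Bezout bound\<close>

definition monoms_upto :: "nat \<Rightarrow> (nat \<times> nat) set" where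
  "monoms_upto N = {m. fst m + snd m \<le> N}"

lemma finite_monoms_upto [simp]: "finite (monoms_upto N)"
  unfolding monoms_upto_def by (rule finite_subset[of _ "{0..N} \<times> {0..N}"]) auto

lemma card_monoms_upto: "2 * card (monoms_upto N) = (N + 1) * (N + 2)"
proof (induction N)
  case 0
  have "monoms_upto 0 = {(0, 0)}"
    by (auto simp: monoms_upto_def)
  then show ?case
    by simp
next
  case (Suc N)
  let ?D = "{m. fst m + snd m = Suc N}"
  have D: "?D = (\<lambda>i. (i, Suc N - i)) ` {0..Suc N}"
    by (auto simp: image_iff)
  have "card ?D = N + 2"
    unfolding D by (subst card_image) (auto simp: inj_on_def)
  moreover have "monoms_upto (Suc N) = monoms_upto N \<union> ?D" "monoms_upto N \<inter> ?D = {}"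
    by (auto simp: monoms_upto_def)
  ultimately have "card (monoms_upto (Suc N)) = card (monoms_upto N) + (N + 2)"
    unfolding D by (simp add: card_Un_disjoint)
  then show ?case
    using Suc by (simp add: algebra_simps)
qed

lemma card_monoms_upto_identity:
  assumes "d1 + d2 \<le> N"
  shows "card (monoms_upto N) + card (monoms_upto (N - d1 - d2)) =
    card (monoms_upto (N - d1)) + card (monoms_upto (N - d2)) + d1 * d2"
proof -
  obtain r where "N = d1 + d2 + r"
    using assms le_Suc_ex by blast
  then have "2 * (card (monoms_upto N) + card (monoms_upto (N - d1 - d2))) =
      2 * (card (monoms_upto (N - d1)) + card (monoms_upto (N - d2)) + d1 * d2)"
    unfolding add_mult_distrib2 card_monoms_upto by (simp add: algebra_simps)
  then show ?thesis
    by simp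
qed

lemma span_monoms_upto:
  assumes "tdeg g \<le> N"
  shows "g \<in> bipoly.span (monom2 ` monoms_upto N)"
proof -
  have "g = (\<Sum>m\<in>monoms_upto N. scale2 (coeff2 g m) (monom2 m))"
  proof (rule coeff2_eqI)
    show "coeff2 g m = coeff2 (\<Sum>m\<in>monoms_upto N. scale2 (coeff2 g m) (monom2 m)) m" for m
      unfolding coeff2_sum_monom2[OF finite_monoms_upto]
      using assms by (cases m) (auto simp: tdeg_le_iff monoms_upto_def)
  qed
  also have "\<dots> \<in> bipoly.span (monom2 ` monoms_upto N)"
    by (intro bipoly.span_sum bipoly.span_scale bipoly.span_base) simp
  finally show ?thesis .
qed

lemma card_le_card_monoms_upto:
  assumes "finite T" and deg: "\<And>t. t \<in> T \<Longrightarrow> tdeg (v t) \<le> N"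
    and indep: "\<And>u. (\<Sum>t\<in>T. scale2 (u t) (v t)) = 0 \<Longrightarrow> \<forall>t\<in>T. u t = 0"
  shows "card T \<le> card (monoms_upto N)"
proof -
  have inj: "inj_on v T"
  proof (rule inj_onI, rule ccontr)
    fix t1 t2
    assume t: "t1 \<in> T" "t2 \<in> T" "v t1 = v t2" "t1 \<noteq> t2"
    define u where "u t = (if t = t1 then 1 else if t = t2 then -1 else (0 :: complex))" for t
    have "(\<Sum>t\<in>T. scale2 (u t) (v t)) = (\<Sum>t\<in>{t1, t2}. scale2 (u t) (v t))"
      using assms(1) t by (intro sum.mono_neutral_right) (auto simp: u_def)
    also have "\<dots> = 0"
      using t by (simp add: u_def)
    finally show False
      using indep[of u] t by (auto simp: u_def)
  qed
  have "bipoly.independent (v ` T)"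
  proof (rule bipoly.independent_if_scalars_zero)
    fix g w
    assume "(\<Sum>x\<in>v ` T. scale2 (g x) x) = 0" "w \<in> v ` T"
    then show "g w = 0"
      using indep[of "\<lambda>t. g (v t)"] by (auto simp: sum.reindex[OF inj])
  qed (use assms(1) in simp)
  moreover have "v ` T \<subseteq> bipoly.span (monom2 ` monoms_upto N)"
    using deg span_monoms_upto by blast
  ultimately have "card (v ` T) \<le> card (monom2 ` monoms_upto N)"
    using bipoly.independent_span_bound by simp
  also have "\<dots> \<le> card (monoms_upto N)"
    by (rule card_image_le) simp
  finally show ?thesis
    using card_image[OF inj] by simp
qed

text \<open>A product of lines through the other points of \<open>Z\<close>, each chosen to miss \<open>z\<close>.\<close>

definition separator :: "(complex \<times> complex) set \<Rightarrow> complex \<times> complex \<Rightarrow> bipoly" where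
  "separator Z z =
     (\<Prod>w\<in>Z - {z}. if fst w \<noteq> fst z then [:[:- fst w, 1:]:] else [:[:- snd w:], 1:])"

lemma poly2_separator:
  "poly2 (separator Z z) x y = (\<Prod>w\<in>Z - {z}. if fst w \<noteq> fst z then x - fst w else y - snd w)"
  unfolding separator_def semiring_hom_prod[OF semiring_hom_poly2]
  by (intro prod.cong) (simp_all add: bipoly_eval_def map_poly_pCons)

lemma poly2_separator_other:
  "finite Z \<Longrightarrow> w \<in> Z \<Longrightarrow> w \<noteq> z \<Longrightarrow> poly2 (separator Z z) (fst w) (snd w) = 0"
  unfolding poly2_separator by (rule prod_zero) auto

lemma poly2_separator_self: "finite Z \<Longrightarrow> poly2 (separator Z z) (fst z) (snd z) \<noteq> 0"
  unfolding poly2_separator by (auto simp: prod_zero_iff prod_eq_iff)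

lemma poly2_sum_separator:
  assumes "finite Z" "z \<in> Z"
  shows "poly2 (\<Sum>w\<in>Z. scale2 (c w) (separator Z w)) (fst z) (snd z) =
    c z * poly2 (separator Z z) (fst z) (snd z)"
proof -
  have "(\<Sum>w\<in>Z. c w * poly2 (separator Z w) (fst z) (snd z)) =
      (\<Sum>w\<in>{z}. c w * poly2 (separator Z w) (fst z) (snd z))"
    using assms by (intro sum.mono_neutral_right) (auto simp: poly2_separator_other)
  then show ?thesis
    by (simp add: semiring_hom_sum[OF semiring_hom_poly2] poly2_scale2)
qed

lemma tdeg_separator: "tdeg (separator Z z) \<le> card Z"
proof -
  have "tdeg (separator Z z) \<le> card (Z - {z})"
    unfolding separator_def
    by (intro tdeg_prod_le) (auto simp: tdeg_le_iff coeff2_def coeff_pCons split: nat.splits)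
  also have "\<dots> \<le> card Z"
    by (cases "finite Z") (simp_all add: card_mono)
  finally show ?thesis .
qed

lemma scale2_mult_right: "scale2 c (f * g) = f * scale2 c g"
  by (simp add: scale2_def)

lemma tdeg_mult_monom2_le: "m \<in> monoms_upto K \<Longrightarrow> tdeg (g * monom2 m) \<le> tdeg g + K"
  using tdeg_mult_le[of g "monom2 m"] by (simp add: tdeg_monom2 monoms_upto_def)

lemma bezout_independent:
  fixes f h :: bipoly
  assumes "f \<noteq> 0" "coprime f h" "finite A" "finite B" "finite Z"
    and vanish: "\<And>z. z \<in> Z \<Longrightarrow> poly2 f (fst z) (snd z) = 0 \<and> poly2 h (fst z) (snd z) = 0"
    and B_deg: "B \<subseteq> monoms_upto K"
    and B_avoid: "\<And>g. g \<noteq> 0 \<Longrightarrow> tdeg f + tdeg g \<le> K \<Longrightarrow> lead_monom2 (f * g) \<notin> B"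
    and rel: "f * (\<Sum>\<alpha>\<in>A. scale2 (a \<alpha>) (monom2 \<alpha>)) + h * (\<Sum>\<beta>\<in>B. scale2 (b \<beta>) (monom2 \<beta>))
      + (\<Sum>z\<in>Z. scale2 (c z) (separator Z z)) = 0"
  shows "(\<forall>\<alpha>\<in>A. a \<alpha> = 0) \<and> (\<forall>\<beta>\<in>B. b \<beta> = 0) \<and> (\<forall>z\<in>Z. c z = 0)"
proof -
  define P where "P = (\<Sum>\<alpha>\<in>A. scale2 (a \<alpha>) (monom2 \<alpha>))"
  define Q where "Q = (\<Sum>\<beta>\<in>B. scale2 (b \<beta>) (monom2 \<beta>))"
  have c0: "c z = 0" if "z \<in> Z" for z
    using arg_cong[OF rel, of "\<lambda>g. poly2 g (fst z) (snd z)"] vanish[OF that]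
      poly2_sum_separator[OF assms(5) that] poly2_separator_self[OF assms(5), of z]
    by (simp add: semiring_hom_add[OF semiring_hom_poly2] semiring_hom_mult[OF semiring_hom_poly2])
  then have PQ: "f * P + h * Q = 0"
    using rel by (simp add: P_def Q_def)
  then have "f dvd h * Q"
    by (metis add_eq_0_iff dvdI mult_minus_right)
  then obtain g where Qg: "Q = f * g"
    using coprime_dvd_mult_right_iff[OF assms(2)] by (blast elim: dvdE)
  have coeffQ: "coeff2 Q m = (if m \<in> B then b m else 0)" for m
    unfolding Q_def by (rule coeff2_sum_monom2[OF assms(4)])
  have Q0: "Q = 0"
  proof (rule ccontr)
    assume "Q \<noteq> 0"
    then have "g \<noteq> 0"
      using Qg by auto
    have "lead_monom2 Q \<in> B"
      using coeff2_lead_monom2[OF \<open>Q \<noteq> 0\<close>] coeffQ by metis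
    moreover have "tdeg Q \<le> K"
      using B_deg coeffQ by (auto simp: tdeg_le_iff monoms_upto_def split: if_splits)
    then have "tdeg f + tdeg g \<le> K"
      using tdeg_mult[OF assms(1) \<open>g \<noteq> 0\<close>] Qg by simp
    ultimately show False
      using B_avoid[OF \<open>g \<noteq> 0\<close>] Qg by simp
  qed
  then have "P = 0"
    using PQ assms(1) by simp
  then have "a \<alpha> = 0" if "\<alpha> \<in> A" for \<alpha>
    using coeff2_sum_monom2[OF assms(3), of a \<alpha>] that by (simp add: P_def)
  moreover have "b \<beta> = 0" if "\<beta> \<in> B" for \<beta>
    using coeffQ[of \<beta>] Q0 that by simp
  ultimately show ?thesis
    using c0 by blast
qed

text \<open>The classical dimension count: among the polynomials of degree \<open>\<le> N\<close>, the multiples \<open>f m\<close>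
  and \<open>h m'\<close> by monomials (where \<open>m'\<close> avoids the leading monomials of multiples of \<open>f\<close>) and the
  separators of \<open>Z\<close> are linearly independent, and counting monomials leaves room for at most
  \<open>tdeg f * tdeg h\<close> points.\<close>

lemma bezout:
  fixes f h :: bipoly
  assumes "f \<noteq> 0" "coprime f h" "finite Z"
    and vanish: "\<And>z. z \<in> Z \<Longrightarrow> poly2 f (fst z) (snd z) = 0 \<and> poly2 h (fst z) (snd z) = 0"
  shows "card Z \<le> tdeg f * tdeg h"
proof -
  define d1 d2 L where "d1 = tdeg f" and "d2 = tdeg h" and "L = lead_monom2 f"
  define N where "N = d1 + d2 + card Z"
  define shifted where "shifted = (\<lambda>m. (fst m + fst L, snd m + snd L)) ` monoms_upto (N - d1 - d2)"
  define A B where "A = monoms_upto (N - d1)" and "B = monoms_upto (N - d2) - shifted"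
  define v where
    "v = case_sum (\<lambda>\<alpha>. f * monom2 \<alpha>) (case_sum (\<lambda>\<beta>. h * monom2 \<beta>) (separator Z))"
  have "shifted \<subseteq> monoms_upto (N - d2)"
    using lead_monom2_total[OF assms(1)]
    by (auto simp: shifted_def monoms_upto_def N_def d1_def L_def)
  moreover have "card shifted = card (monoms_upto (N - d1 - d2))"
    unfolding shifted_def by (rule card_image) (auto simp: inj_on_def)
  ultimately have card_B: "card B + card (monoms_upto (N - d1 - d2)) = card (monoms_upto (N - d2))"
    unfolding B_def
    by (metis card_Diff_subset card_mono finite_monoms_upto finite_subset le_add_diff_inverse2)
  have avoid: "lead_monom2 (f * g) \<notin> B" if "g \<noteq> 0" "tdeg f + tdeg g \<le> N - d2" for g
    using that lead_monom2_mult[OF assms(1) that(1)] lead_monom2_total[OF that(1)]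
    by (auto simp: B_def shifted_def monoms_upto_def d1_def L_def)
  have "card (A <+> B <+> Z) \<le> card (monoms_upto N)"
  proof (rule card_le_card_monoms_upto[where v = v])
    show "finite (A <+> B <+> Z)"
      using assms(3) by (simp add: A_def B_def)
    show "tdeg (v t) \<le> N" if "t \<in> A <+> B <+> Z" for t
      using that tdeg_mult_monom2_le[of _ "N - d1" f] tdeg_mult_monom2_le[of _ "N - d2" h]
        tdeg_separator[of Z]
      by (auto simp: v_def A_def B_def N_def d1_def d2_def Plus_def ac_simps intro: trans_le_add1)
    show "\<forall>t\<in>A <+> B <+> Z. u t = 0" if "(\<Sum>t\<in>A <+> B <+> Z. scale2 (u t) (v t)) = 0" for u
    proof -
      have "f * (\<Sum>\<alpha>\<in>A. scale2 (u (Inl \<alpha>)) (monom2 \<alpha>))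
          + h * (\<Sum>\<beta>\<in>B. scale2 (u (Inr (Inl \<beta>))) (monom2 \<beta>))
          + (\<Sum>z\<in>Z. scale2 (u (Inr (Inr z))) (separator Z z)) = 0"
        using that assms(3)
        by (simp add: sum.Plus A_def B_def v_def sum_distrib_left scale2_mult_right add.assoc)
      from bezout_independent[OF assms(1,2) _ _ assms(3) vanish _ avoid this] show ?thesis
        by (auto simp: A_def B_def)
    qed
  qed
  then have "card A + card B + card Z \<le> card (monoms_upto N)"
    using assms(3) by (simp add: A_def B_def card_Plus)
  then show ?thesis
    using card_monoms_upto_identity[of d1 d2 N] card_B by (simp add: A_def N_def d1_def d2_def)
qed

section \<open>Common factors of polynomials with many common zeros\<close>

lemma dvd_scale2: "q dvd s \<Longrightarrow> q dvd scale2 c s"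
  unfolding scale2_def by (rule dvd_mult)

lemma prime_dvd_scale2: "prime q \<Longrightarrow> q dvd scale2 c s \<Longrightarrow> c \<noteq> 0 \<Longrightarrow> q dvd s"
  unfolding scale2_def using is_unit_const2 not_prime_unit
  by (metis dvd_unit_imp_unit prime_dvd_multD)

lemma combination_avoids_primes:
  fixes w s :: bipoly
  assumes "finite Q" "\<And>q. q \<in> Q \<Longrightarrow> prime q" "\<And>q. q \<in> Q \<Longrightarrow> \<not> (q dvd w \<and> q dvd s)"
  shows "\<exists>c. \<forall>q\<in>Q. \<not> q dvd w + scale2 c s"
proof -
  define bad where "bad q = {c. q dvd w + scale2 c s}" for q
  have "c1 = c2" if "q \<in> Q" "c1 \<in> bad q" "c2 \<in> bad q" for q c1 c2
  proof (rule ccontr)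
    assume "c1 \<noteq> c2"
    have "q dvd (w + scale2 c1 s) - (w + scale2 c2 s)"
      using dvd_diff that(2,3) unfolding bad_def by blast
    also have "(w + scale2 c1 s) - (w + scale2 c2 s) = scale2 (c1 - c2) s"
      by (simp add: bipoly.scale_left_diff_distrib)
    finally have "q dvd s"
      using prime_dvd_scale2 assms(2) that(1) \<open>c1 \<noteq> c2\<close> by simp
    moreover have "q dvd scale2 c1 s"
      using \<open>q dvd s\<close> by (rule dvd_scale2)
    ultimately have "q dvd w"
      using that(2) by (simp add: bad_def dvd_add_left_iff)
    then show False
      using assms(3) that(1) \<open>q dvd s\<close> by blast
  qed
  then have "finite (bad q)" if "q \<in> Q" for q
    using that by (metis finite.simps is_singletonI' is_singleton_the_elem)
  then have "finite (\<Union>q\<in>Q. bad q)"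
    using assms(1) by blast
  then obtain c where "c \<notin> (\<Union>q\<in>Q. bad q)"
    using infinite_UNIV_char_0 ex_new_if_finite by blast
  then show ?thesis
    by (auto simp: bad_def)
qed

text \<open>Unless a prime factor of \<open>f\<close> divides all of \<open>S\<close>, a generic element of the span of
  \<open>S\<close> avoids every prime factor of \<open>f\<close>.\<close>

lemma coprime_or_common_prime_factor:
  fixes f :: bipoly
  assumes "f \<in> S" "f \<noteq> 0" "S \<subseteq> W" "bipoly.subspace W"
  shows "(\<exists>h\<in>W. coprime f h) \<or> (\<exists>p. prime p \<and> (\<forall>s\<in>S. p dvd s))"
proof (rule disjCI)
  assume "\<nexists>p. prime p \<and> (\<forall>s\<in>S. p dvd s)"
  then have escape: "\<exists>s\<in>S. \<not> p dvd s" if "prime p" for p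
    using that by blast
  have "\<exists>w\<in>W. \<forall>q\<in>Q. \<not> q dvd w" if "Q \<subseteq> prime_factors f" for Q
    using finite_subset[OF that finite_set_mset] that
  proof (induction Q rule: finite_induct)
    case empty
    then show ?case
      using assms(1,3) by blast
  next
    case (insert p Q)
    then obtain w where "w \<in> W" "\<forall>q\<in>Q. \<not> q dvd w"
      by blast
    moreover obtain s where "s \<in> S" "\<not> p dvd s"
      using escape insert.prems by (auto simp: in_prime_factors_iff)
    moreover have "prime q" if "q \<in> insert p Q" for q
      using that insert.prems by (auto simp: in_prime_factors_iff)
    ultimately obtain c where "\<forall>q\<in>insert p Q. \<not> q dvd w + scale2 c s"
      using combination_avoids_primes[of "insert p Q" w s] insert.hyps(1) by auto
    moreover have "w + scale2 c s \<in> W"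
      using assms(3,4) \<open>w \<in> W\<close> \<open>s \<in> S\<close> by (auto intro: bipoly.subspace_add bipoly.subspace_scale)
    ultimately show ?case
      by blast
  qed
  then obtain h where "h \<in> W" and h: "\<forall>q\<in>prime_factors f. \<not> q dvd h"
    by blast
  have "coprime f h"
  proof (rule ccontr)
    assume "\<not> coprime f h"
    then obtain q where "q dvd gcd f h" "prime q"
      using assms(2) prime_divisor_exists is_unit_gcd by (metis gcd_eq_0_iff)
    then show False
      using h assms(2) by (auto simp: in_prime_factors_iff)
  qed
  then show "\<exists>h\<in>W. coprime f h"
    using \<open>h \<in> W\<close> by blast
qed

lemma finite_subset_card_gt:
  assumes "infinite I \<or> n < card I"
  obtains Z where "Z \<subseteq> I" "finite Z" "n < card Z"
proof (cases "finite I")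
  case False
  then obtain Z where "Z \<subseteq> I" "finite Z" "card Z = n + 1"
    using infinite_arbitrarily_large by blast
  then show ?thesis
    using that by simp
qed (use assms that in blast)

lemma subspace_vanishing_tdeg_le:
  "bipoly.subspace {w. tdeg w \<le> d \<and> (\<forall>z\<in>I. poly2 w (fst z) (snd z) = 0)}"
proof (rule bipoly.subspaceI, goal_cases)
  case (2 w1 w2)
  then show ?case
    using tdeg_add_le[of w1 w2] by (auto simp: semiring_hom_add[OF semiring_hom_poly2])
next
  case (3 c w)
  then show ?case
    using tdeg_scale2_le[of c w] by (auto simp: poly2_scale2)
qed simp

lemma common_nonconstant_factor:
  assumes deg: "\<And>s. s \<in> S \<Longrightarrow> tdeg s \<le> d"
    and vanish: "\<And>s z. s \<in> S \<Longrightarrow> z \<in> I \<Longrightarrow> poly2 s (fst z) (snd z) = 0"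
    and large: "infinite I \<or> d\<^sup>2 < card I"
  shows "\<exists>G. (\<nexists>c. G = [:[:c:]:]) \<and> (\<forall>s\<in>S. G dvd s)"
proof (cases "S \<subseteq> {0}")
  case True
  then show ?thesis
    by (intro exI[of _ "[:[:0, 1:]:]"]) auto
next
  case False
  then obtain f where "f \<in> S" "f \<noteq> 0"
    by blast
  obtain Z where "Z \<subseteq> I" "finite Z" "d\<^sup>2 < card Z"
    using finite_subset_card_gt[OF large] by blast
  define W where "W = {w. tdeg w \<le> d \<and> (\<forall>z\<in>I. poly2 w (fst z) (snd z) = 0)}"
  have "bipoly.subspace W"
    unfolding W_def by (rule subspace_vanishing_tdeg_le)
  moreover have "S \<subseteq> W"
    using deg vanish by (auto simp: W_def)
  moreover have "\<not> coprime f h" if "h \<in> W" for h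
  proof
    assume "coprime f h"
    then have "card Z \<le> tdeg f * tdeg h"
      using \<open>f \<noteq> 0\<close> \<open>finite Z\<close> \<open>Z \<subseteq> I\<close> \<open>f \<in> S\<close> that vanish
      by (intro bezout) (auto simp: W_def)
    also have "\<dots> \<le> d * d"
      using deg[OF \<open>f \<in> S\<close>] that by (simp add: W_def mult_mono)
    finally show False
      using \<open>d\<^sup>2 < card Z\<close> by (simp add: power2_eq_square)
  qed
  ultimately obtain p where "prime p" "\<forall>s\<in>S. p dvd s"
    using coprime_or_common_prime_factor[OF \<open>f \<in> S\<close> \<open>f \<noteq> 0\<close>] by blast
  then show ?thesis
    using prime_nonconstant2 by blast
qed

lemma basis_modulo_extend:
  fixes G x :: bipoly
  assumes indep: "\<And>c. G dvd (\<Sum>i<r. scale2 (c i) (b i)) \<Longrightarrow> \<forall>i<r. c i = 0"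
    and new: "\<And>c. \<not> G dvd x - (\<Sum>i<r. scale2 (c i) (b i))"
    and dvd: "G dvd (\<Sum>i<Suc r. scale2 (c i) ((b(r := x)) i))"
  shows "\<forall>i<Suc r. c i = 0"
proof -
  have "(\<Sum>i<r. scale2 (c i) ((b(r := x)) i)) = (\<Sum>i<r. scale2 (c i) (b i))"
    by (rule sum.cong) simp_all
  then have dvd': "G dvd (\<Sum>i<r. scale2 (c i) (b i)) + scale2 (c r) x"
    using dvd by simp
  have "c r = 0"
  proof (rule ccontr)
    assume "c r \<noteq> 0"
    then have "x - (\<Sum>i<r. scale2 (- c i / c r) (b i)) =
        scale2 (1 / c r) ((\<Sum>i<r. scale2 (c i) (b i)) + scale2 (c r) x)"
      by (simp add: bipoly.scale_right_distrib bipoly.scale_sum_right sum_negf[symmetric])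
    then have "G dvd x - (\<Sum>i<r. scale2 (- c i / c r) (b i))"
      using dvd_scale2[OF dvd'] by simp
    then show False
      using new[of "\<lambda>i. - c i / c r"] by simp
  qed
  then show ?thesis
    using indep[of c] dvd' by (simp add: less_Suc_eq)
qed

lemma basis_modulo:
  fixes G :: bipoly and a :: "'i \<Rightarrow> bipoly"
  assumes "finite B"
  shows "\<exists>r (b :: nat \<Rightarrow> bipoly) (coord :: 'i \<Rightarrow> nat \<Rightarrow> complex).
     (\<forall>\<beta>\<in>B. G dvd a \<beta> - (\<Sum>i<r. scale2 (coord \<beta> i) (b i))) \<and>
     (\<forall>c. G dvd (\<Sum>i<r. scale2 (c i) (b i)) \<longrightarrow> (\<forall>i<r. c i = 0))"
  using assms
proof (induction B rule: finite_induct)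
  case empty
  show ?case
    by (rule exI[of _ 0]) simp
next
  case (insert \<beta>0 B)
  then obtain r :: nat and b :: "nat \<Rightarrow> bipoly" and coord :: "'i \<Rightarrow> nat \<Rightarrow> complex" where
    approx: "\<forall>\<beta>\<in>B. G dvd a \<beta> - (\<Sum>i<r. scale2 (coord \<beta> i) (b i))" and
    indep: "\<forall>c. G dvd (\<Sum>i<r. scale2 (c i) (b i)) \<longrightarrow> (\<forall>i<r. c i = 0)"
    by blast
  show ?case
  proof (cases "\<exists>c. G dvd a \<beta>0 - (\<Sum>i<r. scale2 (c i) (b i))")
    case True
    then obtain c where "G dvd a \<beta>0 - (\<Sum>i<r. scale2 (c i) (b i))"
      by blast
    then have "\<forall>\<beta>\<in>insert \<beta>0 B. G dvd a \<beta> - (\<Sum>i<r. scale2 ((coord(\<beta>0 := c)) \<beta> i) (b i))"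
      using approx insert.hyps(2) by auto
    then show ?thesis
      using indep by blast
  next
    case False
    define coord' where
      "coord' \<beta> i = (if i = r then (if \<beta> = \<beta>0 then 1 else 0) else if \<beta> = \<beta>0 then 0 else coord \<beta> i)"
      for \<beta> i
    have "G dvd a \<beta> - (\<Sum>i<Suc r. scale2 (coord' \<beta> i) ((b(r := a \<beta>0)) i))" if "\<beta> \<in> insert \<beta>0 B" for \<beta>
    proof -
      have "(\<Sum>i<r. scale2 (coord' \<beta> i) ((b(r := a \<beta>0)) i)) =
          (if \<beta> = \<beta>0 then 0 else (\<Sum>i<r. scale2 (coord \<beta> i) (b i)))"
        by (auto simp: coord'_def intro: sum.cong sum.neutral)
      then show ?thesis
        using that approx by (auto simp: coord'_def)
    qed
    moreover have "\<forall>i<Suc r. c i = 0" if "G dvd (\<Sum>i<Suc r. scale2 (c i) ((b(r := a \<beta>0)) i))" for c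
      using basis_modulo_extend[where x = "a \<beta>0" and c = c] indep False that by blast
    ultimately show ?thesis
      by blast
  qed
qed

section \<open>Polynomials in four variables\<close>

type_synonym quadpoly = "bipoly poly poly"

text \<open>Polynomials in \<open>s\<close> (inner) and \<open>t\<close> (outer) over \<open>\<complex>[x, y]\<close>: the constant \<open>[:[:g:]:]\<close>
  stands for \<open>g(x, y)\<close> and \<open>embed_st k\<close> for \<open>k(s, t)\<close>.\<close>

abbreviation poly4 :: "quadpoly \<Rightarrow> complex \<Rightarrow> complex \<Rightarrow> complex \<Rightarrow> complex \<Rightarrow> complex" where
  "poly4 p x y s t \<equiv> bipoly_eval (\<lambda>g. poly2 g x y) s t p"

definition embed_st :: "bipoly \<Rightarrow> quadpoly" where
  "embed_st = map_poly (map_poly (\<lambda>c. [:[:c:]:]))"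

lemma semiring_hom_const2: "semiring_hom (\<lambda>c. [:[:c:]:])"
  by (rule semiring_hom_comp[OF semiring_hom_pCons_const semiring_hom_pCons_const])

lemma semiring_hom_embed_st: "semiring_hom embed_st"
  unfolding embed_st_def by (intro semiring_hom_map_poly semiring_hom_const2)

lemma poly4_const: "poly4 [:[:g:]:] x y s t = poly2 g x y"
  by (simp add: bipoly_eval_const)

lemma poly4_embed_st: "poly4 (embed_st k) x y s t = poly2 k s t"
  by (simp add: embed_st_def bipoly_eval_map_poly_map_poly bipoly_eval_const)

definition mvar :: "nat \<Rightarrow> mpoly" where
  "mvar i = Poly_Mapping.single (Poly_Mapping.single i 1) 1"

definition mconst :: "complex \<Rightarrow> mpoly" where
  "mconst c = Poly_Mapping.single 0 c"

definition mpoly_of_bipoly :: "nat \<Rightarrow> nat \<Rightarrow> bipoly \<Rightarrow> mpoly" where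
  "mpoly_of_bipoly i j = bipoly_eval mconst (mvar i) (mvar j)"

definition mpoly_of :: "quadpoly \<Rightarrow> mpoly" where
  "mpoly_of = bipoly_eval (mpoly_of_bipoly 0 1) (mvar 2) (mvar 3)"

lemma semiring_hom_mconst: "semiring_hom mconst"
  by (simp add: semiring_hom_def mconst_def single_add mult_single)

lemma semiring_hom_mpoly_of_bipoly: "semiring_hom (mpoly_of_bipoly i j)"
  unfolding mpoly_of_bipoly_def by (intro semiring_hom_bipoly_eval semiring_hom_mconst)

lemma semiring_hom_mpoly_of: "semiring_hom mpoly_of"
  unfolding mpoly_of_def by (intro semiring_hom_bipoly_eval semiring_hom_mpoly_of_bipoly)

lemma mpoly_of_bipoly_const: "mpoly_of_bipoly i j [:[:c:]:] = mconst c"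
  by (simp add: mpoly_of_bipoly_def bipoly_eval_const semiring_hom_0[OF semiring_hom_mconst])

lemma mpoly_of_const: "mpoly_of [:[:g:]:] = mpoly_of_bipoly 0 1 g"
  by (simp add: mpoly_of_def bipoly_eval_const semiring_hom_0[OF semiring_hom_mpoly_of_bipoly])

lemma mpoly_of_embed_st: "mpoly_of (embed_st k) = mpoly_of_bipoly 2 3 k"
  by (simp add: mpoly_of_def embed_st_def bipoly_eval_map_poly_map_poly mpoly_of_bipoly_const
      semiring_hom_0[OF semiring_hom_mpoly_of_bipoly] semiring_hom_0[OF semiring_hom_mconst])
    (simp add: mpoly_of_bipoly_def)

definition monomial_eval :: "(nat \<Rightarrow>\<^sub>0 nat) \<Rightarrow> (nat \<Rightarrow> complex) \<Rightarrow> complex" where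
  "monomial_eval m v = (\<Prod>i\<in>Poly_Mapping.keys m. v i ^ Poly_Mapping.lookup m i)"

lemma monomial_eval_superset:
  "finite S \<Longrightarrow> Poly_Mapping.keys m \<subseteq> S \<Longrightarrow>
    monomial_eval m v = (\<Prod>i\<in>S. v i ^ Poly_Mapping.lookup m i)"
  unfolding monomial_eval_def by (rule prod.mono_neutral_left) (auto simp: in_keys_iff)

lemma monomial_eval_single: "monomial_eval (Poly_Mapping.single i n) v = v i ^ n"
  by (simp add: monomial_eval_def)

lemma monomial_eval_add: "monomial_eval (m + m') v = monomial_eval m v * monomial_eval m' v"
proof -
  let ?S = "Poly_Mapping.keys m \<union> Poly_Mapping.keys m'"
  have "monomial_eval (m + m') v = (\<Prod>i\<in>?S. v i ^ Poly_Mapping.lookup (m + m') i)"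
    by (rule monomial_eval_superset) (simp_all add: keys_add)
  also have "\<dots> = monomial_eval m v * monomial_eval m' v"
    using monomial_eval_superset[of ?S m v] monomial_eval_superset[of ?S m' v]
    by (simp add: lookup_add power_add prod.distrib)
  finally show ?thesis .
qed

lemma mpoly_eval_superset:
  "finite S \<Longrightarrow> Poly_Mapping.keys p \<subseteq> S \<Longrightarrow>
    mpoly_eval p v = (\<Sum>m\<in>S. Poly_Mapping.lookup p m * monomial_eval m v)"
  unfolding mpoly_eval_def monomial_eval_def[symmetric]
  by (rule sum.mono_neutral_left) (auto simp: in_keys_iff)

lemma mpoly_eval_add: "mpoly_eval (p + q) v = mpoly_eval p v + mpoly_eval q v"
proof -
  let ?S = "Poly_Mapping.keys p \<union> Poly_Mapping.keys q"
  have "mpoly_eval (p + q) v = (\<Sum>m\<in>?S. Poly_Mapping.lookup (p + q) m * monomial_eval m v)"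
    by (rule mpoly_eval_superset) (simp_all add: keys_add)
  also have "\<dots> = mpoly_eval p v + mpoly_eval q v"
    using mpoly_eval_superset[of ?S p v] mpoly_eval_superset[of ?S q v]
    by (simp add: lookup_add distrib_right sum.distrib)
  finally show ?thesis .
qed

lemma mpoly_eval_0 [simp]: "mpoly_eval 0 v = 0"
  by (simp add: mpoly_eval_def)

lemma mpoly_eval_single: "mpoly_eval (Poly_Mapping.single m c) v = c * monomial_eval m v"
  by (simp add: mpoly_eval_def monomial_eval_def)

lemma mpoly_eval_mconst: "mpoly_eval (mconst c) v = c"
  by (simp add: mconst_def mpoly_eval_single monomial_eval_def)

lemma mpoly_sum_single: "p = (\<Sum>m\<in>Poly_Mapping.keys p. Poly_Mapping.single m (Poly_Mapping.lookup p m))"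
  by (rule poly_mapping_eqI) (simp add: lookup_sum lookup_single when_def in_keys_iff)

lemma mpoly_eval_sum: "mpoly_eval (sum f A) v = (\<Sum>x\<in>A. mpoly_eval (f x) v)"
  by (induction A rule: infinite_finite_induct) (simp_all add: mpoly_eval_add)

lemma mpoly_eval_mvar_mult: "mpoly_eval (mvar i * p) v = v i * mpoly_eval p v"
proof -
  have "mvar i * p = (\<Sum>m\<in>Poly_Mapping.keys p.
      Poly_Mapping.single (Poly_Mapping.single i 1 + m) (Poly_Mapping.lookup p m))"
    by (subst mpoly_sum_single) (simp add: sum_distrib_left mvar_def mult_single)
  then have "mpoly_eval (mvar i * p) v =
      (\<Sum>m\<in>Poly_Mapping.keys p. Poly_Mapping.lookup p m * (v i * monomial_eval m v))"
    by (simp add: mpoly_eval_sum mpoly_eval_single monomial_eval_add monomial_eval_single)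
  also have "\<dots> = v i * mpoly_eval p v"
    unfolding mpoly_eval_def monomial_eval_def sum_distrib_left by (simp add: algebra_simps)
  finally show ?thesis .
qed

lemma mpoly_eval_mpoly_of_bipoly: "mpoly_eval (mpoly_of_bipoly i j g) v = poly2 g (v i) (v j)"
  unfolding mpoly_of_bipoly_def
  by (subst bipoly_eval_commute[where \<phi> = "\<lambda>p. mpoly_eval p v"])
    (simp_all add: mpoly_eval_add mpoly_eval_mvar_mult mpoly_eval_mconst
      semiring_hom_0[OF semiring_hom_mconst])

lemma mpoly_eval_mpoly_of: "mpoly_eval (mpoly_of p) (pt4 x y s t) = poly4 p x y s t"
  unfolding mpoly_of_def
  by (subst bipoly_eval_commute[where \<phi> = "\<lambda>p. mpoly_eval p (pt4 x y s t)"])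
    (simp_all add: mpoly_eval_add mpoly_eval_mvar_mult mpoly_eval_mpoly_of_bipoly pt4_def
      semiring_hom_0[OF semiring_hom_mpoly_of_bipoly])

lemma poly_in_vars_0 [simp]: "poly_in_vars V 0"
  by (simp add: poly_in_vars_def)

lemma poly_in_vars_add: "poly_in_vars V p \<Longrightarrow> poly_in_vars V q \<Longrightarrow> poly_in_vars V (p + q)"
  unfolding poly_in_vars_def using keys_add[of p q] by blast

lemma poly_in_vars_mvar_mult:
  assumes "i \<in> V" "poly_in_vars V p"
  shows "poly_in_vars V (mvar i * p)"
  unfolding poly_in_vars_def
proof
  fix m
  assume "m \<in> Poly_Mapping.keys (mvar i * p)"
  then obtain m1 m2 where "m = m1 + m2" "m1 \<in> Poly_Mapping.keys (mvar i)" "m2 \<in> Poly_Mapping.keys p"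
    using keys_mult[of "mvar i" p] by blast
  then show "Poly_Mapping.keys m \<subseteq> V"
    using assms keys_add[of m1 m2] by (auto simp: mvar_def poly_in_vars_def)
qed

lemma poly_in_vars_poly:
  "h 0 = 0 \<Longrightarrow> (\<And>c. poly_in_vars V (h c)) \<Longrightarrow> i \<in> V \<Longrightarrow> poly_in_vars V (poly (map_poly h p) (mvar i))"
  by (induction p) (simp_all add: map_poly_pCons poly_in_vars_add poly_in_vars_mvar_mult)

lemma poly_in_vars_bipoly_eval:
  "h 0 = 0 \<Longrightarrow> (\<And>c. poly_in_vars V (h c)) \<Longrightarrow> i \<in> V \<Longrightarrow> j \<in> V \<Longrightarrow>
    poly_in_vars V (bipoly_eval h (mvar i) (mvar j) g)"
  unfolding bipoly_eval_def by (intro poly_in_vars_poly) simp_all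

lemma poly_in_vars_mpoly_of_bipoly: "i \<in> V \<Longrightarrow> j \<in> V \<Longrightarrow> poly_in_vars V (mpoly_of_bipoly i j g)"
  unfolding mpoly_of_bipoly_def
  by (rule poly_in_vars_bipoly_eval) (simp_all add: mconst_def poly_in_vars_def)

lemma poly_in_vars_mpoly_of: "poly_in_vars {0, 1, 2, 3} (mpoly_of p)"
  unfolding mpoly_of_def
  by (rule poly_in_vars_bipoly_eval)
    (simp_all add: poly_in_vars_mpoly_of_bipoly semiring_hom_0[OF semiring_hom_mpoly_of_bipoly])

lemma mpoly_eval_const_mpoly:
  assumes "is_const_mpoly p"
  shows "mpoly_eval p v = Poly_Mapping.lookup p 0"
  using mpoly_eval_superset[of "{0}" p v] assms by (simp add: is_const_mpoly_def monomial_eval_def)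

lemma is_const_mpoly_of_bipoly:
  assumes "i \<noteq> j"
  shows "is_const_mpoly (mpoly_of_bipoly i j g) \<longleftrightarrow> (\<exists>c. g = [:[:c:]:])"
proof
  assume const: "is_const_mpoly (mpoly_of_bipoly i j g)"
  have "poly2 g x y = Poly_Mapping.lookup (mpoly_of_bipoly i j g) 0" for x y
    using mpoly_eval_const_mpoly[OF const, of "\<lambda>k. if k = i then x else y"] assms
    by (simp add: mpoly_eval_mpoly_of_bipoly)
  then show "\<exists>c. g = [:[:c:]:]"
    using poly2_constant by blast
qed (auto simp: mpoly_of_bipoly_const mconst_def is_const_mpoly_def split: if_splits)

lemma mvar_power: "mvar i ^ n = Poly_Mapping.single (Poly_Mapping.single i n) 1"
  by (induction n) (simp_all add: mvar_def mult_single single_add[symmetric])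

lemma single_eq_mconst_prod_mvar:
  assumes "finite V" "Poly_Mapping.keys m \<subseteq> V"
  shows "Poly_Mapping.single m c = mconst c * (\<Prod>k\<in>V. mvar k ^ Poly_Mapping.lookup m k)"
proof -
  have "(\<Prod>k\<in>V. mvar k ^ Poly_Mapping.lookup m k) =
      Poly_Mapping.single (\<Sum>k\<in>V. Poly_Mapping.single k (Poly_Mapping.lookup m k)) 1"
    using assms(1) by (induction V rule: finite_induct) (simp_all add: mvar_power mult_single)
  moreover have "(\<Sum>k\<in>V. Poly_Mapping.single k (Poly_Mapping.lookup m k)) = m"
    using assms by (intro poly_mapping_eqI) (auto simp: lookup_sum lookup_single when_def in_keys_iff)
  ultimately show ?thesis
    by (simp add: mconst_def mult_single)
qed

lemma mpoly_of_bipoly_surj: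
  assumes "i \<noteq> j" "poly_in_vars {i, j} G"
  shows "\<exists>g. mpoly_of_bipoly i j g = G"
proof
  let ?g = "\<Sum>m\<in>Poly_Mapping.keys G.
    monom (monom (Poly_Mapping.lookup G m) (Poly_Mapping.lookup m i)) (Poly_Mapping.lookup m j)"
  have "mpoly_of_bipoly i j ?g = (\<Sum>m\<in>Poly_Mapping.keys G. Poly_Mapping.single m (Poly_Mapping.lookup G m))"
    unfolding semiring_hom_sum[OF semiring_hom_mpoly_of_bipoly]
  proof (rule sum.cong[OF refl])
    fix m
    assume "m \<in> Poly_Mapping.keys G"
    then have "Poly_Mapping.keys m \<subseteq> {i, j}"
      using assms(2) by (simp add: poly_in_vars_def)
    then show "mpoly_of_bipoly i j (monom (monom (Poly_Mapping.lookup G m) (Poly_Mapping.lookup m i))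
        (Poly_Mapping.lookup m j)) = Poly_Mapping.single m (Poly_Mapping.lookup G m)"
      using assms(1) single_eq_mconst_prod_mvar[of "{i, j}" m]
      by (simp add: mpoly_of_bipoly_def bipoly_eval_monom semiring_hom_0[OF semiring_hom_mconst]
          mult.assoc)
  qed
  then show "mpoly_of_bipoly i j ?g = G"
    using mpoly_sum_single by metis
qed

lemma mon_deg_four_vars:
  assumes "Poly_Mapping.keys m \<subseteq> {0, 1, 2, 3}"
  shows "mon_deg m =
    Poly_Mapping.lookup m 0 + Poly_Mapping.lookup m 1 + Poly_Mapping.lookup m 2 + Poly_Mapping.lookup m 3"
proof -
  have "mon_deg m = (\<Sum>i\<in>{0, 1, 2, 3 :: nat}. Poly_Mapping.lookup m i)"
    unfolding mon_deg_def by (rule sum.mono_neutral_left) (use assms in \<open>auto simp: in_keys_iff\<close>)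
  then show ?thesis
    by simp
qed

lemma quadpoly_of_mpoly:
  assumes "poly_in_vars {0, 1, 2, 3} F"
  shows "\<exists>p. mpoly_of p = F \<and>
    (\<forall>c e \<mu>. coeff2 (coeff (coeff p e) c) \<mu> \<noteq> 0 \<longrightarrow> fst \<mu> + snd \<mu> + c + e \<le> total_degree F)"
proof -
  define mono where "mono m =
    monom (monom (monom (monom (Poly_Mapping.lookup F m) (Poly_Mapping.lookup m 0))
      (Poly_Mapping.lookup m 1)) (Poly_Mapping.lookup m 2)) (Poly_Mapping.lookup m 3)" for m
  define p where "p = (\<Sum>m\<in>Poly_Mapping.keys F. mono m)"
  have keys: "Poly_Mapping.keys m \<subseteq> {0, 1, 2, 3}" if "m \<in> Poly_Mapping.keys F" for m
    using assms that by (simp add: poly_in_vars_def)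
  have "mpoly_of p = (\<Sum>m\<in>Poly_Mapping.keys F. Poly_Mapping.single m (Poly_Mapping.lookup F m))"
    unfolding p_def semiring_hom_sum[OF semiring_hom_mpoly_of]
    using single_eq_mconst_prod_mvar[OF _ keys]
    by (intro sum.cong) (simp_all add: mono_def mpoly_of_def mpoly_of_bipoly_def bipoly_eval_monom
        semiring_hom_0[OF semiring_hom_mconst]
        semiring_hom_0[OF semiring_hom_mpoly_of_bipoly[unfolded mpoly_of_bipoly_def]] mult_ac)
  then have "mpoly_of p = F"
    using mpoly_sum_single by metis
  moreover have "fst \<mu> + snd \<mu> + c + e \<le> total_degree F"
    if nz: "coeff2 (coeff (coeff p e) c) \<mu> \<noteq> 0" for c e \<mu>
  proof -
    obtain m where m: "m \<in> Poly_Mapping.keys F" "coeff2 (coeff (coeff (mono m) e) c) \<mu> \<noteq> 0"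
      using sum.not_neutral_contains_not_neutral[OF nz[unfolded p_def coeff_sum coeff2_sum]] by blast
    then have "Poly_Mapping.lookup m 0 = fst \<mu>" "Poly_Mapping.lookup m 1 = snd \<mu>"
      "Poly_Mapping.lookup m 2 = c" "Poly_Mapping.lookup m 3 = e"
      by (auto simp: mono_def coeff2_def coeff_monom split: if_splits)
    moreover have "mon_deg m \<le> total_degree F"
      using m(1) unfolding total_degree_def by (intro Max_ge) auto
    ultimately show ?thesis
      using mon_deg_four_vars[OF keys[OF m(1)]] by simp
  qed
  ultimately show ?thesis
    by blast
qed

section \<open>Cartesian polynomials\<close>

lemma semiring_hom_poly4: "semiring_hom (\<lambda>p. poly4 p x y s t)"
  by (intro semiring_hom_bipoly_eval semiring_hom_poly2)

lemma embed_st_monom2: "embed_st (monom2 \<beta>) = monom (monom 1 (fst \<beta>)) (snd \<beta>)"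
  by (simp add: embed_st_def monom2_def map_poly_monom one_pCons)

lemma embed_st_scale2: "embed_st (scale2 c g) = [:[:[:[:c:]:]:]:] * embed_st g"
  unfolding scale2_def semiring_hom_mult[OF semiring_hom_embed_st] by (simp add: embed_st_def map_poly_pCons)

lemma const_scale2: "[:[:scale2 c g:]:] = [:[:[:[:c:]:]:]:] * ([:[:g:]:] :: quadpoly)"
  by (simp add: scale2_def)

lemma quadpoly_decomp:
  assumes "\<forall>c e \<mu>. coeff2 (coeff (coeff p e) c) \<mu> \<noteq> 0 \<longrightarrow> fst \<mu> + snd \<mu> + c + e \<le> d"
  shows "p = (\<Sum>\<beta>\<in>monoms_upto d. [:[:coeff (coeff p (snd \<beta>)) (fst \<beta>):]:] * embed_st (monom2 \<beta>))"
proof (rule poly_eqI, rule poly_eqI)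
  fix c e
  have "coeff (coeff p e) c = 0" if "(c, e) \<notin> monoms_upto d"
    using that assms by (intro coeff2_eqI) (fastforce simp: monoms_upto_def)
  moreover have "coeff (coeff ([:[:coeff (coeff p (snd \<beta>)) (fst \<beta>):]:] * embed_st (monom2 \<beta>)) e) c =
      (if \<beta> = (c, e) then coeff (coeff p e) c else 0)" for \<beta>
    by (cases \<beta>) (simp add: embed_st_monom2 smult_monom coeff_monom)
  ultimately show "coeff (coeff p e) c = coeff (coeff
      (\<Sum>\<beta>\<in>monoms_upto d. [:[:coeff (coeff p (snd \<beta>)) (fst \<beta>):]:] * embed_st (monom2 \<beta>)) e) c"
    by (auto simp: coeff_sum)
qed

definition specialize_st :: "complex \<Rightarrow> complex \<Rightarrow> quadpoly \<Rightarrow> bipoly" where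
  "specialize_st s t = bipoly_eval (\<lambda>g. g) [:[:s:]:] [:[:t:]:]"

lemma poly2_specialize_st: "poly2 (specialize_st s t p) x y = poly4 p x y s t"
proof -
  have "poly2 ([:[:c:]:] * g) x y = c * poly2 g x y" for c g
    using poly2_scale2 by (simp add: scale2_def)
  then show ?thesis
    unfolding specialize_st_def
    by (subst bipoly_eval_commute[where \<phi> = "\<lambda>g. poly2 g x y"])
      (simp_all add: semiring_hom_add[OF semiring_hom_poly2])
qed

lemma semiring_hom_specialize_st: "semiring_hom (specialize_st s t)"
  unfolding specialize_st_def by (rule semiring_hom_bipoly_eval) (simp add: semiring_hom_def)

lemma specialize_st_decomp:
  "specialize_st s t (\<Sum>\<beta>\<in>B. [:[:a \<beta>:]:] * embed_st (monom2 \<beta>)) =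
    (\<Sum>\<beta>\<in>B. scale2 (s ^ fst \<beta> * t ^ snd \<beta>) (a \<beta>))"
  unfolding semiring_hom_sum[OF semiring_hom_specialize_st] semiring_hom_mult[OF semiring_hom_specialize_st]
  by (simp add: specialize_st_def bipoly_eval_const embed_st_monom2 bipoly_eval_monom poly_const_pow
      scale2_def)

lemma coords_vanish_if_dvd:
  fixes G :: bipoly
  assumes "finite B"
    and approx: "\<forall>\<beta>\<in>B. G dvd a \<beta> - (\<Sum>i<r. scale2 (coord \<beta> i) (b i))"
    and indep: "\<forall>c. G dvd (\<Sum>i<r. scale2 (c i) (b i)) \<longrightarrow> (\<forall>i<r. c i = 0)"
    and dvd: "G dvd (\<Sum>\<beta>\<in>B. scale2 (w \<beta>) (a \<beta>))"
  shows "\<forall>i<r. (\<Sum>\<beta>\<in>B. w \<beta> * coord \<beta> i) = 0"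
proof -
  define X where "X = (\<Sum>i<r. scale2 (\<Sum>\<beta>\<in>B. w \<beta> * coord \<beta> i) (b i))"
  have "X = (\<Sum>\<beta>\<in>B. scale2 (w \<beta>) (\<Sum>i<r. scale2 (coord \<beta> i) (b i)))"
    unfolding X_def bipoly.scale_sum_left bipoly.scale_sum_right bipoly.scale_scale
    by (rule sum.swap)
  then have "(\<Sum>\<beta>\<in>B. scale2 (w \<beta>) (a \<beta>)) - X =
      (\<Sum>\<beta>\<in>B. scale2 (w \<beta>) (a \<beta> - (\<Sum>i<r. scale2 (coord \<beta> i) (b i))))"
    by (simp add: bipoly.scale_right_diff_distrib sum_subtractf)
  also have "G dvd \<dots>"
    using approx by (intro dvd_sum dvd_scale2) blast
  finally have "G dvd X"
    using dvd_diff[OF dvd] by fastforce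
  then show ?thesis
    using indep[rule_format, of "\<lambda>i. \<Sum>\<beta>\<in>B. w \<beta> * coord \<beta> i"] unfolding X_def by blast
qed

lemma cartesian_form:
  assumes approx: "\<And>\<beta>. \<beta> \<in> B \<Longrightarrow> a \<beta> - (\<Sum>i<r. scale2 (coord \<beta> i) (b i)) = G1 * w \<beta>"
    and factor: "\<And>i. i < r \<Longrightarrow> (\<Sum>\<beta>\<in>B. scale2 (coord \<beta> i) (monom2 \<beta>)) = G2 * u i"
  shows "(\<Sum>\<beta>\<in>B. [:[:a \<beta>:]:] * embed_st (monom2 \<beta>)) =
    [:[:G1:]:] * (\<Sum>\<beta>\<in>B. [:[:w \<beta>:]:] * embed_st (monom2 \<beta>))
    + embed_st G2 * (\<Sum>i<r. [:[:b i:]:] * embed_st (u i))"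
proof -
  define K :: "bipoly \<Rightarrow> quadpoly" where "K g = [:[:g:]:]" for g
  define E where "E \<beta> = embed_st (monom2 \<beta>)" for \<beta>
  define C where "C c = K [:[:c:]:]" for c
  have K_a: "K (a \<beta>) = (\<Sum>i<r. C (coord \<beta> i) * K (b i)) + K G1 * K (w \<beta>)" if "\<beta> \<in> B" for \<beta>
  proof -
    have "a \<beta> = (\<Sum>i<r. scale2 (coord \<beta> i) (b i)) + G1 * w \<beta>"
      using approx[OF that] by (simp add: algebra_simps)
    then show ?thesis
      unfolding K_def C_def
      by (simp only: semiring_hom_add[OF semiring_hom_const2] semiring_hom_mult[OF semiring_hom_const2]
          semiring_hom_sum[OF semiring_hom_const2] const_scale2)
  qed
  have E_sum: "(\<Sum>\<beta>\<in>B. C (coord \<beta> i) * E \<beta>) = embed_st (\<Sum>\<beta>\<in>B. scale2 (coord \<beta> i) (monom2 \<beta>))" for i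
    by (simp only: semiring_hom_sum[OF semiring_hom_embed_st] embed_st_scale2 E_def C_def K_def)
  have "(\<Sum>\<beta>\<in>B. K (a \<beta>) * E \<beta>) =
      (\<Sum>\<beta>\<in>B. ((\<Sum>i<r. C (coord \<beta> i) * K (b i)) + K G1 * K (w \<beta>)) * E \<beta>)"
    by (rule sum.cong) (simp_all add: K_a)
  also have "\<dots> =
      (\<Sum>\<beta>\<in>B. \<Sum>i<r. K (b i) * (C (coord \<beta> i) * E \<beta>)) + K G1 * (\<Sum>\<beta>\<in>B. K (w \<beta>) * E \<beta>)"
    by (simp add: ring_distribs sum.distrib sum_distrib_left sum_distrib_right mult_ac)
  also have "(\<Sum>\<beta>\<in>B. \<Sum>i<r. K (b i) * (C (coord \<beta> i) * E \<beta>)) =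
      (\<Sum>i<r. K (b i) * (\<Sum>\<beta>\<in>B. C (coord \<beta> i) * E \<beta>))"
    by (subst sum.swap) (simp only: sum_distrib_left)
  also have "\<dots> = embed_st G2 * (\<Sum>i<r. K (b i) * embed_st (u i))"
    unfolding E_sum sum_distrib_left
    by (intro sum.cong) (simp_all add: factor semiring_hom_mult[OF semiring_hom_embed_st] mult_ac)
  finally show ?thesis
    by (simp only: K_def E_def add.commute)
qed

lemma tdeg_specialize_st:
  assumes "\<forall>c e \<mu>. coeff2 (coeff (coeff p e) c) \<mu> \<noteq> 0 \<longrightarrow> fst \<mu> + snd \<mu> + c + e \<le> d"
  shows "tdeg (specialize_st s t p) \<le> d"
proof -
  have "tdeg (coeff (coeff p (snd \<beta>)) (fst \<beta>)) \<le> d" for \<beta>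
    using assms by (fastforce simp: tdeg_le_iff)
  then show ?thesis
    by (subst quadpoly_decomp[OF assms], unfold specialize_st_decomp)
      (intro tdeg_sum_le order_trans[OF tdeg_scale2_le])
qed

lemma mpoly_of_cartesian_form:
  "mpoly_of ([:[:g:]:] * h + embed_st k * l) =
    mpoly_of_bipoly 0 1 g * mpoly_of h + mpoly_of_bipoly 2 3 k * mpoly_of l"
  unfolding semiring_hom_add[OF semiring_hom_mpoly_of] semiring_hom_mult[OF semiring_hom_mpoly_of]
    mpoly_of_const mpoly_of_embed_st ..

lemma cartesian_iff_quadpoly:
  "cartesian F \<longleftrightarrow> (\<exists>g k h l. (\<nexists>c. g = [:[:c:]:]) \<and> (\<nexists>c. k = [:[:c:]:]) \<and>
    F = mpoly_of ([:[:g:]:] * h + embed_st k * l))"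
proof
  assume "cartesian F"
  then obtain G K H L where GK: "poly_in_vars {0, 1} G" "\<not> is_const_mpoly G"
      "poly_in_vars {2, 3} K" "\<not> is_const_mpoly K"
      "poly_in_vars {0, 1, 2, 3} H" "poly_in_vars {0, 1, 2, 3} L" "F = G * H + K * L"
    unfolding cartesian_def by blast
  obtain g k where g: "mpoly_of_bipoly 0 1 g = G" and k: "mpoly_of_bipoly 2 3 k = K"
    using mpoly_of_bipoly_surj[of 0 1 G] mpoly_of_bipoly_surj[of 2 3 K] GK(1,3) by auto
  obtain h l where "mpoly_of h = H" "mpoly_of l = L"
    using quadpoly_of_mpoly GK(5,6) by metis
  then have "F = mpoly_of ([:[:g:]:] * h + embed_st k * l)"
    using GK(7) g k unfolding mpoly_of_cartesian_form by simp
  moreover have "\<nexists>c. g = [:[:c:]:]" "\<nexists>c. k = [:[:c:]:]"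
    using GK(2,4) g k is_const_mpoly_of_bipoly[of 0 1 g] is_const_mpoly_of_bipoly[of 2 3 k] by simp_all
  ultimately show "\<exists>g k h l. (\<nexists>c. g = [:[:c:]:]) \<and> (\<nexists>c. k = [:[:c:]:]) \<and>
      F = mpoly_of ([:[:g:]:] * h + embed_st k * l)"
    by blast
next
  assume "\<exists>g k h l. (\<nexists>c. g = [:[:c:]:]) \<and> (\<nexists>c. k = [:[:c:]:]) \<and>
    F = mpoly_of ([:[:g:]:] * h + embed_st k * l)"
  then obtain g k h l where gk: "\<nexists>c. g = [:[:c:]:]" "\<nexists>c. k = [:[:c:]:]"
    and "F = mpoly_of_bipoly 0 1 g * mpoly_of h + mpoly_of_bipoly 2 3 k * mpoly_of l"
    unfolding mpoly_of_cartesian_form by blast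
  moreover have "poly_in_vars {0, 1} (mpoly_of_bipoly 0 1 g)" "poly_in_vars {2, 3} (mpoly_of_bipoly 2 3 k)"
    "poly_in_vars {0, 1, 2, 3} (mpoly_of h)" "poly_in_vars {0, 1, 2, 3} (mpoly_of l)"
    by (simp_all only: poly_in_vars_mpoly_of) (simp_all add: poly_in_vars_mpoly_of_bipoly)
  moreover have "\<not> is_const_mpoly (mpoly_of_bipoly 0 1 g)" "\<not> is_const_mpoly (mpoly_of_bipoly 2 3 k)"
    using gk by (simp_all add: is_const_mpoly_of_bipoly)
  ultimately show "cartesian F"
    unfolding cartesian_def by blast
qed

lemma cartesian_imp_infinite_product_in_zero_set:
  assumes "cartesian F"
  obtains I J :: "(complex \<times> complex) set" where "infinite I" "infinite J" "I \<times> J \<subseteq> zero_set4 F"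
proof -
  obtain g k h l where "\<nexists>c. g = [:[:c:]:]" "\<nexists>c. k = [:[:c:]:]"
    and F: "F = mpoly_of ([:[:g:]:] * h + embed_st k * l)"
    using assms cartesian_iff_quadpoly by blast
  moreover have "{(x, y). poly2 g x y = 0} \<times> {(s, t). poly2 k s t = 0} \<subseteq> zero_set4 F"
    unfolding F zero_set4_def mpoly_eval_mpoly_of semiring_hom_add[OF semiring_hom_poly4]
      semiring_hom_mult[OF semiring_hom_poly4] poly4_const poly4_embed_st
    by auto
  ultimately show thesis
    using that infinite_zeros_poly2 by blast
qed

lemma quadpoly_cartesian_if_vanishes:
  assumes bound: "\<forall>c e \<mu>. coeff2 (coeff (coeff p e) c) \<mu> \<noteq> 0 \<longrightarrow> fst \<mu> + snd \<mu> + c + e \<le> d"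
    and I: "infinite I \<or> d\<^sup>2 < card I" and J: "infinite J \<or> d\<^sup>2 < card J"
    and vanish: "\<And>x y s t. (x, y) \<in> I \<Longrightarrow> (s, t) \<in> J \<Longrightarrow> poly4 p x y s t = 0"
  shows "\<exists>G1 G2 H L. (\<nexists>c. G1 = [:[:c:]:]) \<and> (\<nexists>c. G2 = [:[:c:]:]) \<and>
    p = [:[:G1:]:] * H + embed_st G2 * L"
proof -
  define a where "a \<beta> = coeff (coeff p (snd \<beta>)) (fst \<beta>)" for \<beta>
  have p: "p = (\<Sum>\<beta>\<in>monoms_upto d. [:[:a \<beta>:]:] * embed_st (monom2 \<beta>))"
    unfolding a_def by (rule quadpoly_decomp[OF bound])
  obtain G1 where G1: "\<nexists>c. G1 = [:[:c:]:]" "\<forall>q\<in>(\<lambda>z. specialize_st (fst z) (snd z) p) ` J. G1 dvd q"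
    using common_nonconstant_factor[OF _ _ I, of "(\<lambda>z. specialize_st (fst z) (snd z) p) ` J"]
      vanish tdeg_specialize_st[OF bound] by (force simp: poly2_specialize_st)
  obtain r :: nat and b :: "nat \<Rightarrow> bipoly" and coord :: "nat \<times> nat \<Rightarrow> nat \<Rightarrow> complex" where
    approx: "\<forall>\<beta>\<in>monoms_upto d. G1 dvd a \<beta> - (\<Sum>i<r. scale2 (coord \<beta> i) (b i))" and
    indep: "\<forall>c. G1 dvd (\<Sum>i<r. scale2 (c i) (b i)) \<longrightarrow> (\<forall>i<r. c i = 0)"
    using basis_modulo[OF finite_monoms_upto, where G = G1 and a = a] by blast
  define e where "e i = (\<Sum>\<beta>\<in>monoms_upto d. scale2 (coord \<beta> i) (monom2 \<beta>))" for i
  have e_vanish: "poly2 (e i) s t = 0" if "(s, t) \<in> J" "i < r" for s t i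
  proof -
    have "G1 dvd (\<Sum>\<beta>\<in>monoms_upto d. scale2 (s ^ fst \<beta> * t ^ snd \<beta>) (a \<beta>))"
      using G1(2) that(1) specialize_st_decomp[of s t a "monoms_upto d"] p by force
    from coords_vanish_if_dvd[OF finite_monoms_upto approx indep this]
    have "(\<Sum>\<beta>\<in>monoms_upto d. s ^ fst \<beta> * t ^ snd \<beta> * coord \<beta> i) = 0"
      using that(2) by blast
    then show ?thesis
      by (simp add: e_def semiring_hom_sum[OF semiring_hom_poly2] poly2_scale2 poly2_monom2 mult_ac)
  qed
  have e_deg: "tdeg (e i) \<le> d" for i
    unfolding e_def
    by (intro tdeg_sum_le order_trans[OF tdeg_scale2_le]) (simp add: tdeg_monom2 monoms_upto_def)
  have "\<exists>G. (\<nexists>c. G = [:[:c:]:]) \<and> (\<forall>q\<in>e ` {..<r}. G dvd q)"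
    by (rule common_nonconstant_factor[OF _ _ J]) (use e_deg e_vanish in auto)
  then obtain G2 where G2: "\<nexists>c. G2 = [:[:c:]:]" "\<forall>i\<in>{..<r}. \<exists>v. e i = G2 * v"
    unfolding dvd_def by blast
  then obtain u where "\<forall>i\<in>{..<r}. e i = G2 * u i"
    using bchoice[OF G2(2)] by blast
  moreover obtain w where "\<forall>\<beta>\<in>monoms_upto d. a \<beta> - (\<Sum>i<r. scale2 (coord \<beta> i) (b i)) = G1 * w \<beta>"
    using bchoice[OF approx[unfolded dvd_def]] by blast
  ultimately have "p = [:[:G1:]:] * (\<Sum>\<beta>\<in>monoms_upto d. [:[:w \<beta>:]:] * embed_st (monom2 \<beta>))
      + embed_st G2 * (\<Sum>i<r. [:[:b i:]:] * embed_st (u i))"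
    by (subst p, intro cartesian_form[where coord = coord]) (simp_all add: e_def)
  then show ?thesis
    using G1(1) G2(1) by blast
qed

lemma cartesian_if_large_product_in_zero_set:
  assumes "poly_in_vars {0, 1, 2, 3} F" "total_degree F = d"
    and "infinite I \<or> d\<^sup>2 < card I" "infinite J \<or> d\<^sup>2 < card J" "I \<times> J \<subseteq> zero_set4 F"
  shows "cartesian F"
proof -
  obtain p where pF: "mpoly_of p = F"
    and bound: "\<forall>c e \<mu>. coeff2 (coeff (coeff p e) c) \<mu> \<noteq> 0 \<longrightarrow> fst \<mu> + snd \<mu> + c + e \<le> d"
    using quadpoly_of_mpoly[OF assms(1)] assms(2) by blast
  have "poly4 p x y s t = 0" if "(x, y) \<in> I" "(s, t) \<in> J" for x y s t
    using assms(5) that unfolding zero_set4_def pF[symmetric] mpoly_eval_mpoly_of by blast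
  then show ?thesis
    using quadpoly_cartesian_if_vanishes[OF bound assms(3,4)] pF cartesian_iff_quadpoly by blast
qed

theorem theorem2p5:
  fixes F :: mpoly and d :: nat
  assumes "poly_in_vars {0, 1, 2, 3} F"
    and "total_degree F = d"
  shows "cartesian F \<longleftrightarrow>
    (\<exists>I J :: (complex \<times> complex) set.
        (infinite I \<or> d ^ 2 < card I) \<and> (infinite J \<or> d ^ 2 < card J) \<and>
        I \<times> J \<subseteq> zero_set4 F)"
proof
  assume "cartesian F"
  then obtain I J :: "(complex \<times> complex) set" where "infinite I" "infinite J" "I \<times> J \<subseteq> zero_set4 F"
    by (rule cartesian_imp_infinite_product_in_zero_set)
  then show "\<exists>I J :: (complex \<times> complex) set.
      (infinite I \<or> d ^ 2 < card I) \<and> (infinite J \<or> d ^ 2 < card J) \<and> I \<times> J \<subseteq> zero_set4 F"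
    by blast
next
  assume "\<exists>I J :: (complex \<times> complex) set.
      (infinite I \<or> d ^ 2 < card I) \<and> (infinite J \<or> d ^ 2 < card J) \<and> I \<times> J \<subseteq> zero_set4 F"
  then show "cartesian F"
    using cartesian_if_large_product_in_zero_set[OF assms] by blast
qed

end
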